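(* Let $r\ge 1$ and $n\ge 0$ be integers. Let $A(n,r)$ be the set of partitions of $n$ in which every part occurring with odd multiplicity has multiplicity at least $2r+1$, and let $C(n,r)$ be the set of partitions of $n$ in which every odd part is congruent to $2r+1 \pmod{4r+2}$. For a partition $\lambda=(\lambda_1^{m_1},\lambda_2^{m_2},\ldots)\in A(n,r)$ (multiplicity notation, distinct parts $\lambda_i$ with multiplicities $m_i\ge 1$), define $\beta_r(\lambda)=\bigcup_{i\ge1}\beta_r(\lambda_i^{m_i})$ (multiset union), where: If $\lambda_i$ is even: $\lambda_i^{m_i}\mapsto \lambda_i^{m_i-(2r+2v+2)},(2\lambda_i)^{r+v+1}$ if $m_i\equiv 2v+1 \pmod{2r+1}$ with $0\le v\le r-1$; and $\lambda_i^{m_i}\mapsto \lambda_i^{m_i-2v},(2\lambda_i)^{v}$ if $m_i\equiv 2v\pmod{2r+1}$ with $0\le v\le r$. If $\lambda_i$ is odd: $\lambda_i^{m_i}\mapsto ((2r+1)\lambda_i)^{\frac{m_i-(2r+2v+2)}{2r+1}},(2\lambda_i)^{r+v+1}$ if $m_i\equiv 2v+1\pmod{2r+1}$ with $0\le v\le r-1$; and $\lambda_i^{m_i}\mapsto ((2r+1)\lambda_i)^{\frac{m_i-2v}{2r+1}},(2\lambda_i)^{v}$ if $m_i\equiv 2v\pmod{2r+1}$ with $0\le v\le r$. Then $\beta_r$ is a well-defined bijection from $A(n,r)$ onto $C(n,r)$.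
   Context: A partition is written in multiplicity notation $(\lambda_1^{m_1},\lambda_2^{m_2},\ldots)$, meaning the part $\lambda_i$ appears $m_i$ times; a factor $x^0$ means the part $x$ does not appear. Partitions are regarded as multisets, and $\cup$ denotes multiset union. *)

theory Defs
  imports Main "HOL-Library.Multiset"
begin

definition partitions :: "nat \<Rightarrow> nat multiset set" where
  "partitions n = {p. (\<forall>x\<in>#p. 0 < x) \<and> sum_mset p = n}"

definition A_set :: "nat \<Rightarrow> nat \<Rightarrow> nat multiset set" where
  "A_set n r = {p \<in> partitions n. \<forall>x\<in>#p. odd (count p x) \<longrightarrow> 2*r+1 \<le> count p x}"

definition C_set :: "nat \<Rightarrow> nat \<Rightarrow> nat multiset set" where
  "C_set n r = {p \<in> partitions n. \<forall>x\<in>#p. odd x \<longrightarrow> x mod (4*r+2) = 2*r+1}"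

definition beta_block :: "nat \<Rightarrow> nat \<Rightarrow> nat \<Rightarrow> nat multiset" where
  "beta_block r x m =
     (let q = m mod (2*r+1) in
      if odd q then
        (let v = (q - 1) div 2 in
          (if even x then replicate_mset (m - (2*r+2*v+2)) x
           else replicate_mset ((m - (2*r+2*v+2)) div (2*r+1)) ((2*r+1)*x))
          + replicate_mset (r+v+1) (2*x))
      else
        (let v = q div 2 in
          (if even x then replicate_mset (m - 2*v) x
           else replicate_mset ((m - 2*v) div (2*r+1)) ((2*r+1)*x))
          + replicate_mset v (2*x)))"

definition beta :: "nat \<Rightarrow> nat multiset \<Rightarrow> nat multiset" where
  "beta r p = (\<Sum>x\<in>set_mset p. beta_block r x (count p x))"

text \<open>Well-definedness of the block formulas: the multiplicities prescribed are
  nonnegative integers (no truncation of natural subtraction / division).\<close>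
definition beta_well_defined :: "nat \<Rightarrow> nat multiset \<Rightarrow> bool" where
  "beta_well_defined r p =
     (\<forall>x\<in>#p. let m = count p x; q = m mod (2*r+1) in
        if odd q then
          (let v = (q - 1) div 2 in 2*r+2*v+2 \<le> m \<and>
             (odd x \<longrightarrow> (2*r+1) dvd (m - (2*r+2*v+2))))
        else
          (let v = q div 2 in 2*v \<le> m \<and> (odd x \<longrightarrow> (2*r+1) dvd (m - 2*v))))"

end

theory Submission
  imports Defs
begin

(* A multiplicity m that is even or at least 2r+1 is uniquely of the form m = (2r+1)a + 2c
  with 0 <= c <= 2r, and beta_r replaces the block x^m by x^((2r+1)a) (2x)^c if x is even and
  by ((2r+1)x)^a (2x)^c if x is odd. This preserves the sum, and the only odd parts produced
  are (2r+1)x with x odd. In the image an even part y occurs (2r+1)a_y + c_(y/2) times, so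
  c_(y/2) is the residue of that multiplicity mod 2r+1 and a_y its quotient, while an odd part
  (2r+1)x occurs a_x times. Reading a and c off an arbitrary partition in C(n,r) in this way
  gives the inverse map. *)

lemma sum_mset_multiplicity:
  fixes M :: "'a::semiring_1 multiset"
  shows "sum_mset M = (\<Sum>x\<in>set_mset M. of_nat (count M x) * x)"
proof (induction M)
  case empty then show ?case by simp
next
  case (add a M)
  have "(\<Sum>x\<in>insert a (set_mset M). of_nat (count (add_mset a M) x) * x)
      = a + (\<Sum>x\<in>insert a (set_mset M). of_nat (count M x) * x)"
  proof -
    have "of_nat (count (add_mset a M) x) * x = of_nat (count M x) * x + (if x = a then a else 0)"
      for x :: 'a
      by (simp add: distrib_right add.commute)
    then show ?thesis by (simp add: sum.distrib add.commute)
  qed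
  also have "\<dots> = a + (\<Sum>x\<in>set_mset M. of_nat (count M x) * x)"
    by (rule arg_cong[where f = "(+) a"], rule sum.mono_neutral_right) (auto simp: not_in_iff)
  finally show ?case using add.IH by simp
qed

lemma sum_if_eq_conj:
  fixes f :: "'a \<Rightarrow> 'b::comm_monoid_add"
  assumes "finite S" "\<And>x. x \<notin> S \<Longrightarrow> f x = 0"
  shows "(\<Sum>x\<in>S. if x = a \<and> P then f x else 0) = (if P then f a else 0)"
  using assms by (cases P) (auto simp: sum.delta)

lemma mod_double_eq_self_iff:
  fixes k y :: nat
  assumes "odd k"
  shows "y mod (2*k) = k \<longleftrightarrow> odd y \<and> k dvd y"
proof
  assume "y mod (2*k) = k"
  then have "y = k * (2 * (y div (2*k)) + 1)"
    using div_mult_mod_eq[of y "2*k"] by (simp add: algebra_simps)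
  then obtain q where "y = k * (2 * q + 1)" by blast
  then show "odd y \<and> k dvd y" using assms by simp
next
  assume odd_dvd: "odd y \<and> k dvd y"
  then obtain t where y: "y = k * t" by blast
  with odd_dvd have "odd t" by simp
  then obtain u where "t = 2 * u + 1" by (rule oddE)
  then have "y = k + u * (2*k)" using y by (simp add: algebra_simps)
  moreover have "k < 2*k" using assms by (cases k) auto
  ultimately show "y mod (2*k) = k" by simp
qed

definition admissible_mult :: "nat \<Rightarrow> nat \<Rightarrow> bool" where
  "admissible_mult r m \<longleftrightarrow> even m \<or> 2*r+1 \<le> m"

(* The c of m = (2r+1)a + 2c: in the paper's notation c = r+v+1 if m mod (2r+1) = 2v+1,
  and c = v if m mod (2r+1) = 2v. *)
definition doubled_mult :: "nat \<Rightarrow> nat \<Rightarrow> nat" where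
  "doubled_mult r m = (let q = m mod (2*r+1) in if odd q then r + (q - 1) div 2 + 1 else q div 2)"

definition kept_mult :: "nat \<Rightarrow> nat \<Rightarrow> nat" where
  "kept_mult r m = m - 2 * doubled_mult r m"

lemma doubled_mult_le: "doubled_mult r m \<le> 2*r"
proof -
  define q where "q = m mod (2*r+1)"
  have "q < 2*r+1" unfolding q_def by simp
  then show ?thesis unfolding doubled_mult_def Let_def q_def[symmetric]
    by (auto elim!: oddE)
qed

lemma admissible_mult_decomp:
  assumes "admissible_mult r m"
  obtains a where "m = (2*r+1) * a + 2 * doubled_mult r m"
proof -
  define q where "q = m mod (2*r+1)"
  define j where "j = m div (2*r+1)"
  have m: "m = (2*r+1) * j + q" unfolding q_def j_def by (metis div_mult_mod_eq mult.commute)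
  have "q < 2*r+1" unfolding q_def by simp
  show thesis
  proof (cases "odd q")
    case True
    then have "2 * doubled_mult r m = (2*r+1) + q"
      unfolding doubled_mult_def Let_def q_def[symmetric] by (auto elim!: oddE)
    moreover have "j \<noteq> 0"
    proof
      assume "j = 0"
      then have "m = q" using m by simp
      then show False using assms True \<open>q < 2*r+1\<close> unfolding admissible_mult_def by simp
    qed
    ultimately have "m = (2*r+1) * (j - 1) + 2 * doubled_mult r m"
      using m by (cases j) simp_all
    then show thesis by (rule that)
  next
    case False
    then have "2 * doubled_mult r m = q"
      unfolding doubled_mult_def Let_def q_def[symmetric] by simp
    then show thesis using m by (intro that[of j]) simp
  qed
qed

lemma two_doubled_mult_le: "admissible_mult r m \<Longrightarrow> 2 * doubled_mult r m \<le> m"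
  by (metis admissible_mult_decomp le_add2)

lemma dvd_kept_mult: "admissible_mult r m \<Longrightarrow> (2*r+1) dvd kept_mult r m"
  by (metis admissible_mult_decomp kept_mult_def add_diff_cancel_right' dvd_triv_left)

lemma kept_doubled_mult: "admissible_mult r m \<Longrightarrow> kept_mult r m + 2 * doubled_mult r m = m"
  by (simp add: kept_mult_def two_doubled_mult_le)

lemma admissible_mult_linear: "admissible_mult r ((2*r+1) * a + 2 * c)"
  unfolding admissible_mult_def by (cases a) auto

lemma doubled_mult_linear:
  assumes "c \<le> 2*r"
  shows "doubled_mult r ((2*r+1) * a + 2 * c) = c"
proof (cases "c \<le> r")
  case True
  then have "((2*r+1) * a + 2 * c) mod (2*r+1) = 2 * c" by (simp only: mod_mult_self4) simp
  then show ?thesis unfolding doubled_mult_def by simp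
next
  case False
  have carry: "(2*r+1) * a + 2 * c = (2*r+1) * (a + 1) + (2 * (c - r - 1) + 1)"
    using False by simp
  have "2 * (c - r - 1) + 1 < 2*r+1" using assms False by arith
  then have "((2*r+1) * a + 2 * c) mod (2*r+1) = 2 * (c - r - 1) + 1"
    unfolding carry by (simp only: mod_mult_self4 mod_less)
  then show ?thesis using False unfolding doubled_mult_def by simp
qed

lemma kept_mult_linear:
  assumes "c \<le> 2*r"
  shows "kept_mult r ((2*r+1) * a + 2 * c) = (2*r+1) * a"
  unfolding kept_mult_def doubled_mult_linear[OF assms] by simp

lemma beta_block_eq:
  "beta_block r x m =
     (if even x then replicate_mset (kept_mult r m) x
      else replicate_mset (kept_mult r m div (2*r+1)) ((2*r+1)*x))
     + replicate_mset (doubled_mult r m) (2*x)"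
  by (simp add: beta_block_def kept_mult_def doubled_mult_def Let_def)

lemma count_beta_block:
  "count (beta_block r x m) y =
     (if x = y \<and> even y then kept_mult r m else 0)
   + (if x = y div (2*r+1) \<and> (2*r+1) dvd y \<and> odd y then kept_mult r m div (2*r+1) else 0)
   + (if x = y div 2 \<and> even y then doubled_mult r m else 0)"
proof -
  obtain k where k: "k = 2*r+1" by simp
  then have "k \<noteq> 0" "odd k" by simp_all
  then have "x = y div k \<and> k dvd y \<and> odd y \<longleftrightarrow> odd x \<and> k * x = y"
    by (metis dvd_mult_div_cancel dvd_triv_left even_mult_iff nonzero_mult_div_cancel_left)
  then show ?thesis unfolding beta_block_eq by (auto simp: count_replicate_mset k)
qed

lemma count_beta:
  "count (beta r p) y =
     (if even y then kept_mult r (count p y) else 0)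
   + (if (2*r+1) dvd y \<and> odd y then kept_mult r (count p (y div (2*r+1))) div (2*r+1) else 0)
   + (if even y then doubled_mult r (count p (y div 2)) else 0)"
proof -
  have "kept_mult r (count p x) = 0" "doubled_mult r (count p x) = 0" if "x \<notin># p" for x
    using that by (simp_all add: kept_mult_def doubled_mult_def not_in_iff)
  note vanish = this sum_if_eq_conj[OF finite_set_mset]
  have "count (beta r p) y = (\<Sum>x\<in>set_mset p. count (beta_block r x (count p x)) y)"
    unfolding beta_def by (simp add: count_sum)
  also have "\<dots> = (\<Sum>x\<in>set_mset p. if x = y \<and> even y then kept_mult r (count p x) else 0)
     + (\<Sum>x\<in>set_mset p. if x = y div (2*r+1) \<and> ((2*r+1) dvd y \<and> odd y)
                          then kept_mult r (count p x) div (2*r+1) else 0)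
     + (\<Sum>x\<in>set_mset p. if x = y div 2 \<and> even y then doubled_mult r (count p x) else 0)"
    unfolding count_beta_block sum.distrib by simp
  also have "\<dots> = (if even y then kept_mult r (count p y) else 0)
   + (if (2*r+1) dvd y \<and> odd y then kept_mult r (count p (y div (2*r+1))) div (2*r+1) else 0)
   + (if even y then doubled_mult r (count p (y div 2)) else 0)"
    by (simp add: vanish)
  finally show ?thesis .
qed

corollary count_beta_even:
  "even y \<Longrightarrow> count (beta r p) y = kept_mult r (count p y) + doubled_mult r (count p (y div 2))"
  by (simp add: count_beta)

corollary count_beta_odd_multiple:
  assumes "odd x"
  shows "count (beta r p) ((2*r+1) * x) = kept_mult r (count p x) div (2*r+1)"
proof -
  define k where "k = 2*r+1"
  have "odd k" "k \<noteq> 0" by (simp_all add: k_def)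
  then have "k dvd k * x" "odd (k * x)" "k * x div k = x" using assms by simp_all
  then have "count (beta r p) (k * x) = kept_mult r (count p x) div k"
    using count_beta[of r p "k * x", folded k_def] by simp
  then show ?thesis by (simp only: k_def)
qed

corollary count_beta_odd_not_dvd:
  "odd y \<Longrightarrow> \<not> (2*r+1) dvd y \<Longrightarrow> count (beta r p) y = 0"
  by (simp add: count_beta)

lemma sum_mset_beta_block:
  assumes "admissible_mult r m"
  shows "sum_mset (beta_block r x m) = m * x"
proof -
  have "(2*r+1) * x * (kept_mult r m div (2*r+1)) = kept_mult r m * x"
    using dvd_kept_mult[OF assms] by (metis dvd_mult_div_cancel mult.commute mult.left_commute)
  then have "sum_mset (beta_block r x m) = (kept_mult r m + 2 * doubled_mult r m) * x"
    unfolding beta_block_eq by (simp add: algebra_simps)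
  then show ?thesis using kept_doubled_mult[OF assms] by simp
qed

lemma sum_mset_beta:
  assumes "\<And>x. x \<in># p \<Longrightarrow> admissible_mult r (count p x)"
  shows "sum_mset (beta r p) = sum_mset p"
proof -
  have "sum_mset (beta r p) = (\<Sum>x\<in>set_mset p. sum_mset (beta_block r x (count p x)))"
    unfolding beta_def by (rule sum_comp_morphism[where h = sum_mset, symmetric, unfolded comp_def]) simp_all
  also have "\<dots> = (\<Sum>x\<in>set_mset p. count p x * x)"
    using assms by (simp add: sum_mset_beta_block)
  also have "\<dots> = sum_mset p"
    by (simp add: sum_mset_multiplicity)
  finally show ?thesis .
qed

lemma admissible_mult_count_A_set: "p \<in> A_set n r \<Longrightarrow> admissible_mult r (count p x)"
  unfolding A_set_def admissible_mult_def by (cases "x \<in># p") (auto simp: not_in_iff)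

lemma beta_well_defined_if_admissible:
  assumes "\<And>x. x \<in># p \<Longrightarrow> admissible_mult r (count p x)"
  shows "beta_well_defined r p"
  unfolding beta_well_defined_def
proof
  fix x assume "x \<in># p"
  then have "2 * doubled_mult r (count p x) \<le> count p x"
    and "(2*r+1) dvd count p x - 2 * doubled_mult r (count p x)"
    using assms two_doubled_mult_le dvd_kept_mult unfolding kept_mult_def by auto
  then show "let m = count p x; q = m mod (2*r+1) in
        if odd q then
          (let v = (q - 1) div 2 in 2*r+2*v+2 \<le> m \<and>
             (odd x \<longrightarrow> (2*r+1) dvd (m - (2*r+2*v+2))))
        else
          (let v = q div 2 in 2*v \<le> m \<and> (odd x \<longrightarrow> (2*r+1) dvd (m - 2*v)))"
    unfolding doubled_mult_def Let_def by (simp add: algebra_simps split: if_splits)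
qed

lemma beta_in_C_set:
  assumes "p \<in> A_set n r"
  shows "beta r p \<in> C_set n r"
proof -
  have adm: "\<And>x. admissible_mult r (count p x)" using assms by (rule admissible_mult_count_A_set)
  have "count p 0 = 0" using assms unfolding A_set_def partitions_def by (auto simp: count_eq_zero_iff)
  then have "count (beta r p) 0 = 0" by (simp add: count_beta_even kept_mult_def doubled_mult_def)
  then have "\<forall>y\<in>#beta r p. 0 < y" by (metis gr0I count_eq_zero_iff)
  moreover have "sum_mset (beta r p) = n"
    using assms adm by (simp add: sum_mset_beta A_set_def partitions_def)
  moreover have "y mod (4*r+2) = 2*r+1" if "y \<in># beta r p" "odd y" for y
  proof -
    have "(2*r+1) dvd y" using that count_beta_odd_not_dvd by (metis count_eq_zero_iff)
    then show ?thesis using that mod_double_eq_self_iff[of "2*r+1" y] by simp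
  qed
  ultimately show ?thesis unfolding C_set_def partitions_def by blast
qed

definition beta_inv :: "nat \<Rightarrow> nat multiset \<Rightarrow> nat multiset" where
  "beta_inv r \<mu> = Abs_multiset (\<lambda>x.
     (2*r+1) * (if even x then count \<mu> x div (2*r+1) else count \<mu> ((2*r+1) * x))
     + 2 * (count \<mu> (2*x) mod (2*r+1)))"

lemma count_beta_inv:
  "count (beta_inv r \<mu>) x =
     (2*r+1) * (if even x then count \<mu> x div (2*r+1) else count \<mu> ((2*r+1) * x))
     + 2 * (count \<mu> (2*x) mod (2*r+1))"
proof -
  define k where "k = 2*r+1"
  have "k \<noteq> 0" by (simp add: k_def)
  define f where "f x = k * (if even x then count \<mu> x div k else count \<mu> (k * x))
     + 2 * (count \<mu> (2*x) mod k)" for x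
  have vanish: "f x = 0" if "x \<notin># \<mu>" "2 * x \<notin># \<mu>" "k * x \<notin># \<mu>" for x
    using that by (simp add: f_def not_in_iff)
  have "{x. 0 < f x} \<subseteq> set_mset \<mu> \<union> (\<lambda>y. y div 2) ` set_mset \<mu> \<union> (\<lambda>y. y div k) ` set_mset \<mu>"
  proof
    fix x assume "x \<in> {x. 0 < f x}"
    then consider "x \<in># \<mu>" | "2 * x \<in># \<mu>" | "k * x \<in># \<mu>"
      using vanish by force
    then show "x \<in> set_mset \<mu> \<union> (\<lambda>y. y div 2) ` set_mset \<mu> \<union> (\<lambda>y. y div k) ` set_mset \<mu>"
      using \<open>k \<noteq> 0\<close> by cases force+
  qed
  then have "finite {x. 0 < f x}" by (rule finite_subset) simp
  then show ?thesis unfolding beta_inv_def f_def[unfolded k_def, symmetric] by simp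
qed

lemma
  fixes r :: nat and \<mu> :: "nat multiset"
  defines "k \<equiv> 2*r+1"
  shows kept_mult_count_beta_inv:
      "kept_mult r (count (beta_inv r \<mu>) x) = k * (if even x then count \<mu> x div k else count \<mu> (k * x))"
    and doubled_mult_count_beta_inv: "doubled_mult r (count (beta_inv r \<mu>) x) = count \<mu> (2*x) mod k"
    and admissible_mult_count_beta_inv: "admissible_mult r (count (beta_inv r \<mu>) x)"
proof -
  have "count \<mu> (2*x) mod k \<le> 2*r" by (simp add: k_def less_Suc_eq_le)
  then show "kept_mult r (count (beta_inv r \<mu>) x) = k * (if even x then count \<mu> x div k else count \<mu> (k * x))"
    and "doubled_mult r (count (beta_inv r \<mu>) x) = count \<mu> (2*x) mod k"
    unfolding count_beta_inv[of r \<mu> x, folded k_def] k_def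
    by (simp_all only: kept_mult_linear doubled_mult_linear)
  show "admissible_mult r (count (beta_inv r \<mu>) x)"
    unfolding count_beta_inv by (rule admissible_mult_linear)
qed

lemma beta_inv_beta:
  assumes "p \<in> A_set n r"
  shows "beta_inv r (beta r p) = p"
proof (rule multiset_eqI)
  fix x
  define k where "k = 2*r+1"
  have adm: "\<And>x. admissible_mult r (count p x)" using assms by (rule admissible_mult_count_A_set)
  have kept: "k dvd kept_mult r (count p y)" for y using dvd_kept_mult[OF adm] by (simp add: k_def)
  have doubled: "doubled_mult r (count p y) < k" for y using doubled_mult_le[of r] by (simp add: k_def le_imp_less_Suc)
  have residue: "(a + b) mod k = b" and quotient: "(a + b) div k = a div k"
    if "k dvd a" "b < k" for a b using that by (auto elim!: dvdE)
  have "count (beta r p) (2*x) mod k = doubled_mult r (count p x)"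
    using count_beta_even[of "2*x" r p] by (simp add: residue kept doubled)
  moreover have "k * (if even x then count (beta r p) x div k else count (beta r p) (k * x))
      = kept_mult r (count p x)"
    using count_beta_even[of x r p] count_beta_odd_multiple[of x r p, folded k_def]
    by (simp add: quotient kept doubled)
  ultimately have "count (beta_inv r (beta r p)) x = kept_mult r (count p x) + 2 * doubled_mult r (count p x)"
    by (simp add: count_beta_inv[of r _ x, folded k_def])
  then show "count (beta_inv r (beta r p)) x = count p x" using kept_doubled_mult[OF adm] by simp
qed

lemma beta_beta_inv:
  assumes "\<mu> \<in> C_set n r"
  shows "beta r (beta_inv r \<mu>) = \<mu>"
proof (rule multiset_eqI)
  fix y
  define k where "k = 2*r+1"
  have "odd k" "k \<noteq> 0" by (simp_all add: k_def)
  note kept = kept_mult_count_beta_inv[of r \<mu>, folded k_def]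
   and doubled = doubled_mult_count_beta_inv[of r \<mu>, folded k_def]
  show "count (beta r (beta_inv r \<mu>)) y = count \<mu> y"
  proof (cases "even y")
    case True
    then show ?thesis by (simp add: count_beta_even kept doubled)
  next
    case odd_y: False
    show ?thesis
    proof (cases "k dvd y")
      case True
      then obtain x where y: "y = k * x" by blast
      with odd_y have "odd x" by simp
      then show ?thesis
        using count_beta_odd_multiple[of x r, folded k_def] \<open>k \<noteq> 0\<close> by (simp add: y kept)
    next
      case False
      have "y \<notin># \<mu>"
      proof
        assume "y \<in># \<mu>"
        then have "y mod (2*k) = k" using assms odd_y unfolding C_set_def k_def by (simp add: algebra_simps)
        then show False using False mod_double_eq_self_iff[OF \<open>odd k\<close>] by simp
      qed
      then show ?thesis using count_beta_odd_not_dvd[of y r, folded k_def] odd_y False by (simp add: not_in_iff)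
    qed
  qed
qed

lemma beta_inv_in_A_set:
  assumes "\<mu> \<in> C_set n r"
  shows "beta_inv r \<mu> \<in> A_set n r"
proof -
  have "count \<mu> 0 = 0" using assms unfolding C_set_def partitions_def by (auto simp: count_eq_zero_iff)
  then have "count (beta_inv r \<mu>) 0 = 0" by (simp add: count_beta_inv)
  then have "\<forall>x\<in>#beta_inv r \<mu>. 0 < x" by (metis gr0I count_eq_zero_iff)
  moreover have "sum_mset (beta_inv r \<mu>) = n"
  proof -
    have "sum_mset (beta_inv r \<mu>) = sum_mset (beta r (beta_inv r \<mu>))"
      by (rule sum_mset_beta[symmetric]) (rule admissible_mult_count_beta_inv)
    then show ?thesis using beta_beta_inv[OF assms] assms by (simp add: C_set_def partitions_def)
  qed
  moreover have "2*r+1 \<le> count (beta_inv r \<mu>) x" if "odd (count (beta_inv r \<mu>) x)" for x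
    using that admissible_mult_count_beta_inv[of r \<mu> x] unfolding admissible_mult_def by simp
  ultimately show ?thesis unfolding A_set_def partitions_def by blast
qed

theorem mainTheorem1:
  fixes r n :: nat
  assumes "1 \<le> r"
  shows "(\<forall>p\<in>A_set n r. beta_well_defined r p) \<and> bij_betw (beta r) (A_set n r) (C_set n r)"
proof
  show "\<forall>p\<in>A_set n r. beta_well_defined r p"
    using beta_well_defined_if_admissible admissible_mult_count_A_set by blast
  show "bij_betw (beta r) (A_set n r) (C_set n r)"
    by (rule bij_betw_byWitness[where f' = "beta_inv r"])
       (auto simp: beta_inv_beta beta_beta_inv beta_in_C_set beta_inv_in_A_set)
qed

end
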